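(* Consider the following online algorithm for Submodular Welfare with bidders $1,\dots,n$, utilities $f_1,\dots,f_n$, and items $1,\dots,m$ arriving in this (adversarial) order. Set $S^0_j=\emptyset$ for all $j$. For $i=1,\dots,m$: set $S^i_j=S^{i-1}_j$ for all $j$; order the bidders as $j_1,\dots,j_n$ so that $f_{j_1}(i\mid S^{i-1}_{j_1})\ge f_{j_2}(i\mid S^{i-1}_{j_2})\ge\dots\ge f_{j_n}(i\mid S^{i-1}_{j_n})$; choose a random bidder $j^i$ with $\Pr[j^i=j_r]=2^{-r}$ for $r=1,\dots,n$ (with the remaining probability $2^{-n}$ no bidder is chosen); if a bidder $j^i$ was chosen and $f_{j^i}(i\mid S^{i-1}_{j^i})\ge0$, set $S^i_{j^i}\leftarrow S^i_{j^i}\cup\{i\}$. Let $O=(O_1,\dots,O_n)$ be a fixed optimal allocation, i.e., a maximizer of $\sum_j f_j(O_j)$ over pairwise disjoint $O_1,\dots,O_n\subseteq\{1,\dots,m\}$. For $i=0,\dots,m$ let $H^i_j=(O_j\cap\{1,\dots,i\})\cup S^i_j$, and write $f(S^i)=\sum_j f_j(S^i_j)$, $f(H^i)=\sum_j f_j(H^i_j)$. Define $P^i=f(S^i)-f(S^{i-1})$ and $K^i=f(H^i)-f(H^{i-1})$. Then for every $i=1,\dots,m$, $\mathbb E[K^i]\le 2\,\mathbb E[P^i]$.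
   Context: Each $f_j:2^{\{1,\dots,m\}}\to\mathbb R_{\ge0}$ is a non-negative submodular (not necessarily monotone) function, i.e., $f_j(A\cup B)+f_j(A\cap B)\le f_j(A)+f_j(B)$ for all $A,B$. Notation: $f_j(i\mid S)=f_j(S\cup\{i\})-f_j(S)$. Ties in the ordering of bidders are broken arbitrarily. *)

theory Defs
  imports "HOL-Probability.Probability"
begin

text \<open>Bidders are 1..n, items are 1..m. An allocation is a map bidder => set of items.
  f j is the utility of bidder j.\<close>

type_synonym alloc = "nat \<Rightarrow> nat set"

definition marg :: "(nat set \<Rightarrow> real) \<Rightarrow> nat \<Rightarrow> nat set \<Rightarrow> real" where
  "marg g i S = g (insert i S) - g S"

definition submodular_on :: "nat set \<Rightarrow> (nat set \<Rightarrow> real) \<Rightarrow> bool" where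
  "submodular_on U g \<longleftrightarrow>
     (\<forall>A B. A \<subseteq> U \<longrightarrow> B \<subseteq> U \<longrightarrow> g (A \<union> B) + g (A \<inter> B) \<le> g A + g B)"

definition nonneg_on :: "nat set \<Rightarrow> (nat set \<Rightarrow> real) \<Rightarrow> bool" where
  "nonneg_on U g \<longleftrightarrow> (\<forall>A. A \<subseteq> U \<longrightarrow> 0 \<le> g A)"

definition welfare :: "nat \<Rightarrow> (nat \<Rightarrow> nat set \<Rightarrow> real) \<Rightarrow> alloc \<Rightarrow> real" where
  "welfare n f S = (\<Sum>j\<in>{1..n}. f j (S j))"

definition feasible_alloc :: "nat \<Rightarrow> nat \<Rightarrow> alloc \<Rightarrow> bool" where
  "feasible_alloc n m Opt \<longleftrightarrow> (\<forall>j\<in>{1..n}. Opt j \<subseteq> {1..m}) \<and>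
     (\<forall>j\<in>{1..n}. \<forall>k\<in>{1..n}. j \<noteq> k \<longrightarrow> Opt j \<inter> Opt k = {})"

definition optimal_alloc :: "nat \<Rightarrow> nat \<Rightarrow> (nat \<Rightarrow> nat set \<Rightarrow> real) \<Rightarrow> alloc \<Rightarrow> bool" where
  "optimal_alloc n m f Opt \<longleftrightarrow> feasible_alloc n m Opt \<and>
     (\<forall>O2. feasible_alloc n m O2 \<longrightarrow> welfare n f O2 \<le> welfare n f Opt)"

definition valid_order :: "nat \<Rightarrow> (nat \<Rightarrow> nat set \<Rightarrow> real) \<Rightarrow> nat \<Rightarrow> alloc \<Rightarrow> nat list \<Rightarrow> bool" where
  "valid_order n f i S js \<longleftrightarrow> distinct js \<and> set js = {1..n} \<and>
     sorted_wrt (\<lambda>a b. marg (f a) i (S a) \<ge> marg (f b) i (S b)) js"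

text \<open>Random choice: the r-th bidder in the list (1-indexed) with probability 2^-r,
  no bidder with the remaining probability 2^-(length).\<close>
fun choose_pmf :: "nat list \<Rightarrow> nat option pmf" where
  "choose_pmf [] = return_pmf None"
| "choose_pmf (j # js) =
     bind_pmf (bernoulli_pmf (1/2)) (\<lambda>b. if b then return_pmf (Some j) else choose_pmf js)"

text \<open>One step of the algorithm for item i, with tie-breaking rule tb
  (tb i S is the ordering used for item i when the current allocation is S).\<close>
definition alg_step :: "(nat \<Rightarrow> nat set \<Rightarrow> real) \<Rightarrow> (nat \<Rightarrow> alloc \<Rightarrow> nat list) \<Rightarrow> nat \<Rightarrow> alloc \<Rightarrow> alloc pmf" where
  "alg_step f tb i S =
     map_pmf (\<lambda>c. case c of None \<Rightarrow> S
                  | Some j \<Rightarrow> if marg (f j) i (S j) \<ge> 0 then S(j := insert i (S j)) else S)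
             (choose_pmf (tb i S))"

text \<open>The random trajectory after processing items 1..k: T t = S^t for t \<le> k.\<close>
fun alg_traj :: "(nat \<Rightarrow> nat set \<Rightarrow> real) \<Rightarrow> (nat \<Rightarrow> alloc \<Rightarrow> nat list) \<Rightarrow> nat \<Rightarrow> (nat \<Rightarrow> alloc) pmf" where
  "alg_traj f tb 0 = return_pmf (\<lambda>t j. {})"
| "alg_traj f tb (Suc k) =
     bind_pmf (alg_traj f tb k) (\<lambda>T. map_pmf (\<lambda>S'. T(Suc k := S')) (alg_step f tb (Suc k) (T k)))"

definition hybrid :: "alloc \<Rightarrow> nat \<Rightarrow> alloc \<Rightarrow> alloc" where
  "hybrid Opt i S = (\<lambda>j. (Opt j \<inter> {1..i}) \<union> S j)"

end

theory Submission
  imports Defs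
begin

(*
  Condition on the allocation S = S^(i-1) and let a_j = max (f_j(i | S_j)) 0. If the bidders
  are ordered as js, bidder js!r is chosen with probability 2^-(r+1) and then raises f(S) by
  a_(js!r), so E[P^i] is the weighted sum of these values. Any outcome raises f(H) by the
  marginal value g of item i to its owner o in O (if there is one), plus at most a_j when a
  non-owner j gets the item; both bounds, g <= a_o included, hold by submodularity because S_j
  is contained in H^(i-1)_j. Hence E[K^i] <= g + E[P^i] - 2^-(p+1) a_o, where p is the position
  of o. Since a_o is at most the value of every bidder ahead of it, the first p+1 terms of
  E[P^i] are at least (1 - 2^-(p+1)) a_o, so E[K^i] <= 2 E[P^i] given S^(i-1), and the
  unconditional bound follows by averaging over the history.
*)

lemma sum_half_powers: "(\<Sum>r<N. (1/2::real) ^ Suc r) + (1/2) ^ N = 1"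
  by (induction N) (auto simp: field_simps)

lemma le_halving_weighted_sum:
  fixes x :: "nat \<Rightarrow> real"
  assumes "p < N" and nonneg: "\<And>r. 0 \<le> x r" and antimono: "\<And>r. r < p \<Longrightarrow> x p \<le> x r"
  shows "x p \<le> (\<Sum>r<N. (1/2) ^ Suc r * x r) + (1/2) ^ Suc p * x p"
proof -
  have "(\<Sum>r<Suc p. (1/2::real) ^ Suc r) = 1 - (1/2) ^ Suc p"
    using sum_half_powers[of "Suc p"] by linarith
  then have "(1 - (1/2) ^ Suc p) * x p = (\<Sum>r<Suc p. (1/2) ^ Suc r) * x p"
    by simp
  also have "\<dots> \<le> (\<Sum>r<Suc p. (1/2) ^ Suc r * x r)"
    unfolding sum_distrib_right
    by (rule sum_mono, rule mult_left_mono) (auto simp: antimono less_Suc_eq)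
  also have "\<dots> \<le> (\<Sum>r<N. (1/2) ^ Suc r * x r)"
    by (rule sum_mono2) (use \<open>p < N\<close> nonneg in auto)
  finally show ?thesis by (simp add: left_diff_distrib)
qed

lemma submodular_on_marg_antimono:
  assumes "submodular_on U g" "A \<subseteq> B" "B \<subseteq> U" "i \<in> U" "i \<notin> B"
  shows "marg g i B \<le> marg g i A"
proof -
  have "insert i A \<subseteq> U" using assms(2-4) by blast
  then have "g (insert i A \<union> B) + g (insert i A \<inter> B) \<le> g (insert i A) + g B"
    using assms(1,3) unfolding submodular_on_def by blast
  moreover have "insert i A \<union> B = insert i B" "insert i A \<inter> B = A"
    using assms(2,5) by auto
  ultimately show ?thesis unfolding marg_def by simp
qed

lemma set_pmf_choose_pmf: "set_pmf (choose_pmf js) \<subseteq> insert None (Some ` set js)"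
  by (induction js) (auto split: if_splits)

lemma finite_set_pmf_choose_pmf: "finite (set_pmf (choose_pmf js))"
  by (rule finite_subset[OF set_pmf_choose_pmf]) auto

lemma expectation_choose_pmf:
  fixes h :: "nat option \<Rightarrow> real"
  shows "measure_pmf.expectation (choose_pmf js) h =
    (\<Sum>r<length js. (1/2) ^ Suc r * h (Some (js ! r))) + (1/2) ^ length js * h None"
proof (induction js)
  case Nil
  then show ?case by simp
next
  case (Cons j js)
  have "measure_pmf.expectation (choose_pmf (j # js)) h =
     (\<Sum>b\<in>UNIV. pmf (bernoulli_pmf (1/2)) b *\<^sub>R measure_pmf.expectation
         (if b then return_pmf (Some j) else choose_pmf js) h)"
    unfolding choose_pmf.simps
    by (rule pmf_expectation_bind) (auto simp: finite_set_pmf_choose_pmf)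
  also have "\<dots> = 1/2 * h (Some j) + 1/2 * measure_pmf.expectation (choose_pmf js) h"
    by (simp add: UNIV_bool)
  finally show ?case
    unfolding Cons length_Cons sum.lessThan_Suc_shift
    by (simp add: sum_distrib_left algebra_simps)
qed

lemma welfare_cong: "(\<And>j. j \<in> {1..n} \<Longrightarrow> X j = Y j) \<Longrightarrow> welfare n f X = welfare n f Y"
  unfolding welfare_def by (rule sum.cong) auto

lemma welfare_fun_upd:
  assumes j: "j \<in> {1..n}"
  shows "welfare n f (X(j := A)) = welfare n f X + (f j A - f j (X j))"
proof -
  have "welfare n f (X(j := A)) = (\<Sum>l\<in>{1..n}. f l (X l) + (if l = j then f j A - f j (X j) else 0))"
    unfolding welfare_def by (rule sum.cong) auto
  then show ?thesis using j by (simp add: sum.distrib welfare_def)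
qed

definition step_outcome :: "(nat \<Rightarrow> nat set \<Rightarrow> real) \<Rightarrow> nat \<Rightarrow> alloc \<Rightarrow> nat option \<Rightarrow> alloc" where
  "step_outcome f i S c =
     (case c of None \<Rightarrow> S
      | Some j \<Rightarrow> if marg (f j) i (S j) \<ge> 0 then S(j := insert i (S j)) else S)"

lemma step_outcome_None [simp]: "step_outcome f i S None = S"
  by (simp add: step_outcome_def)

lemma alg_step_eq_map_step_outcome:
  "alg_step f tb i S = map_pmf (step_outcome f i S) (choose_pmf (tb i S))"
  unfolding alg_step_def step_outcome_def ..

lemma welfare_step_outcome_Some:
  "j \<in> {1..n} \<Longrightarrow>
     welfare n f (step_outcome f i S (Some j)) = welfare n f S + max (marg (f j) i (S j)) 0"
  by (simp add: step_outcome_def welfare_fun_upd marg_def)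

lemma hybrid_fun_upd_insert:
  "hybrid Opt i (S(j := insert i (S j))) = (hybrid Opt i S)(j := insert i (hybrid Opt i S j))"
  unfolding hybrid_def by (auto simp: fun_eq_iff)

lemma hybrid_eq_prev:
  assumes "1 \<le> i"
  shows "hybrid Opt i S j =
    (if i \<in> Opt j then insert i (hybrid Opt (i - 1) S j) else hybrid Opt (i - 1) S j)"
proof -
  have "{1..i} = insert i {1..i - 1}" using assms by auto
  then show ?thesis unfolding hybrid_def by auto
qed

lemma set_pmf_alg_step_subset: "S' \<in> set_pmf (alg_step f tb i S) \<Longrightarrow> S' j \<subseteq> insert i (S j)"
  unfolding alg_step_def by (auto split: option.splits if_splits)

lemma finite_set_pmf_alg_step: "finite (set_pmf (alg_step f tb i S))"
  unfolding alg_step_def by (simp add: finite_set_pmf_choose_pmf)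

lemma finite_set_pmf_alg_traj: "finite (set_pmf (alg_traj f tb k))"
  by (induction k) (auto simp: finite_set_pmf_alg_step)

lemma alg_traj_items_subset: "T \<in> set_pmf (alg_traj f tb k) \<Longrightarrow> T t j \<subseteq> {1..t}"
proof (induction k arbitrary: T t)
  case 0
  then show ?case by simp
next
  case (Suc k)
  then obtain T0 S' where T0: "T0 \<in> set_pmf (alg_traj f tb k)"
    and S': "S' \<in> set_pmf (alg_step f tb (Suc k) (T0 k))" and T: "T = T0(Suc k := S')"
    by auto
  show ?case
  proof (cases "t = Suc k")
    case True
    have "S' j \<subseteq> insert (Suc k) (T0 k j)" by (rule set_pmf_alg_step_subset[OF S'])
    also have "\<dots> \<subseteq> {1..Suc k}" using Suc.IH[OF T0, of k] by auto
    finally show ?thesis using T True by simp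
  next
    case False
    then show ?thesis using T Suc.IH[OF T0] by simp
  qed
qed

lemma map_pmf_alg_traj_prefix:
  assumes "t \<le> k" and prefix: "\<And>T T'. (\<forall>s\<le>t. T s = T' s) \<Longrightarrow> h T = h T'"
  shows "map_pmf h (alg_traj f tb k) = map_pmf h (alg_traj f tb t)"
  using assms(1)
proof (induction k rule: dec_induct)
  case (step l)
  have "h (T(Suc l := S')) = h T" for T S'
    using step.hyps by (intro prefix) auto
  then have "map_pmf h (alg_traj f tb (Suc l))
      = alg_traj f tb l \<bind> (\<lambda>T. map_pmf (\<lambda>_. h T) (alg_step f tb (Suc l) (T l)))"
    by (simp add: map_bind_pmf map_pmf_comp)
  also have "\<dots> = map_pmf h (alg_traj f tb l)"
    by (simp add: map_pmf_def)
  finally show ?case using step.IH by simp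
qed simp

lemma expectation_alg_traj_item:
  fixes g :: "alloc \<Rightarrow> alloc \<Rightarrow> real"
  assumes i: "i \<in> {1..m}"
  shows "measure_pmf.expectation (alg_traj f tb m) (\<lambda>T. g (T (i - 1)) (T i)) =
    (\<Sum>T\<in>set_pmf (alg_traj f tb (i - 1)). pmf (alg_traj f tb (i - 1)) T *
       measure_pmf.expectation (alg_step f tb i (T (i - 1))) (g (T (i - 1))))"
proof -
  obtain k where k: "i = Suc k" using i by (cases i) auto
  define G where "G = (\<lambda>T :: nat \<Rightarrow> alloc. g (T k) (T (Suc k)))"
  have prefix: "map_pmf G (alg_traj f tb m) = map_pmf G (alg_traj f tb (Suc k))"
    by (rule map_pmf_alg_traj_prefix) (use i k in \<open>simp_all add: G_def\<close>)
  have "measure_pmf.expectation (alg_traj f tb m) G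
      = measure_pmf.expectation (map_pmf G (alg_traj f tb m)) (\<lambda>x. x)"
    by simp
  also have "\<dots> = measure_pmf.expectation (alg_traj f tb (Suc k)) G"
    unfolding prefix by simp
  also have "\<dots> = (\<Sum>T\<in>set_pmf (alg_traj f tb k). pmf (alg_traj f tb k) T *\<^sub>R
      measure_pmf.expectation (map_pmf (\<lambda>S'. T(Suc k := S')) (alg_step f tb (Suc k) (T k))) G)"
    unfolding alg_traj.simps
    by (rule pmf_expectation_bind[OF finite_set_pmf_alg_traj]) (simp_all add: finite_set_pmf_alg_step)
  also have "\<dots> = (\<Sum>T\<in>set_pmf (alg_traj f tb k). pmf (alg_traj f tb k) T *
      measure_pmf.expectation (alg_step f tb (Suc k) (T k)) (g (T k)))"
    by (simp add: G_def)
  finally show ?thesis using k by (simp add: G_def)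
qed

(* S plays the role of S^(i-1); opt_gain is the value of K^i when item i stays unallocated. *)
locale item_step =
  fixes n m :: nat and f :: "nat \<Rightarrow> nat set \<Rightarrow> real" and Opt :: alloc and i :: nat and S :: alloc
  assumes submodular: "\<forall>j\<in>{1..n}. submodular_on {1..m} (f j)"
    and feasible: "feasible_alloc n m Opt"
    and item: "i \<in> {1..m}"
    and earlier_items: "\<forall>j. S j \<subseteq> {1..i - 1}"
begin

definition gain :: "nat \<Rightarrow> real" where
  "gain j = max (marg (f j) i (S j)) 0"

definition opt_gain :: real where
  "opt_gain = welfare n f (hybrid Opt i S) - welfare n f (hybrid Opt (i - 1) S)"

lemma gain_nonneg: "0 \<le> gain j"
  unfolding gain_def by simp

lemma marg_hybrid_prev_le_gain:
  assumes "j \<in> {1..n}"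
  shows "marg (f j) i (hybrid Opt (i - 1) S j) \<le> gain j"
proof -
  have "S j \<subseteq> {1..i - 1}" using earlier_items by blast
  then have "marg (f j) i (hybrid Opt (i - 1) S j) \<le> marg (f j) i (S j)"
    using submodular assms item
    by (intro submodular_on_marg_antimono[where U = "{1..m}"]) (auto simp: hybrid_def subset_iff)
  then show ?thesis unfolding gain_def by simp
qed

lemma opt_gain_no_owner:
  assumes "\<forall>j\<in>{1..n}. i \<notin> Opt j"
  shows "opt_gain = 0"
proof -
  have "welfare n f (hybrid Opt i S) = welfare n f (hybrid Opt (i - 1) S)"
    by (rule welfare_cong) (use assms item in \<open>simp add: hybrid_eq_prev\<close>)
  then show ?thesis unfolding opt_gain_def by simp
qed

lemma opt_gain_le_gain_owner:
  assumes owner: "owner \<in> {1..n}" "i \<in> Opt owner"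
  shows "opt_gain \<le> gain owner"
proof -
  have disjoint: "i \<notin> Opt j" if "j \<in> {1..n}" "j \<noteq> owner" for j
    using feasible that owner unfolding feasible_alloc_def by blast
  have "welfare n f (hybrid Opt i S) =
      welfare n f ((hybrid Opt (i - 1) S)(owner := insert i (hybrid Opt (i - 1) S owner)))"
    by (rule welfare_cong) (use item owner disjoint in \<open>auto simp: hybrid_eq_prev\<close>)
  then have "opt_gain = marg (f owner) i (hybrid Opt (i - 1) S owner)"
    unfolding opt_gain_def using owner by (simp add: welfare_fun_upd marg_def)
  then show ?thesis using marg_hybrid_prev_le_gain[OF owner(1)] by simp
qed

definition non_owner_gain :: "nat \<Rightarrow> real" where
  "non_owner_gain j = (if i \<in> Opt j then 0 else gain j)"

lemma hybrid_gain_Some_le: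
  assumes j: "j \<in> {1..n}"
  shows "welfare n f (hybrid Opt i (step_outcome f i S (Some j))) - welfare n f (hybrid Opt (i - 1) S)
    \<le> opt_gain + non_owner_gain j"
proof (cases "marg (f j) i (S j) \<ge> 0")
  case True
  have "welfare n f (hybrid Opt i (step_outcome f i S (Some j)))
      = welfare n f (hybrid Opt i S) + marg (f j) i (hybrid Opt i S j)"
    using True j by (simp add: step_outcome_def hybrid_fun_upd_insert welfare_fun_upd marg_def)
  moreover have "marg (f j) i (hybrid Opt i S j) \<le> non_owner_gain j"
    using item marg_hybrid_prev_le_gain[OF j]
    by (auto simp: non_owner_gain_def hybrid_eq_prev marg_def insert_absorb)
  ultimately show ?thesis unfolding opt_gain_def by simp
next
  case False
  then show ?thesis by (simp add: step_outcome_def opt_gain_def non_owner_gain_def gain_nonneg)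
qed

lemma expectation_choose_gain:
  assumes "set js \<subseteq> {1..n}"
  shows "measure_pmf.expectation (choose_pmf js) (\<lambda>c. welfare n f (step_outcome f i S c) - welfare n f S)
    = (\<Sum>r<length js. (1/2) ^ Suc r * gain (js ! r))"
proof -
  have "welfare n f (step_outcome f i S (Some (js ! r))) - welfare n f S = gain (js ! r)"
    if "r < length js" for r
    using welfare_step_outcome_Some[of "js ! r"] assms nth_mem[OF that] unfolding gain_def by auto
  then show ?thesis
    unfolding expectation_choose_pmf by simp
qed

lemma expectation_choose_hybrid_gain_le:
  assumes "set js \<subseteq> {1..n}"
  shows "measure_pmf.expectation (choose_pmf js)
      (\<lambda>c. welfare n f (hybrid Opt i (step_outcome f i S c)) - welfare n f (hybrid Opt (i - 1) S))
    \<le> opt_gain + (\<Sum>r<length js. (1/2) ^ Suc r * non_owner_gain (js ! r))"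
proof -
  define C where "C = (\<Sum>r<length js. (1/2::real) ^ Suc r)"
  have Some_bound: "welfare n f (hybrid Opt i (step_outcome f i S (Some (js ! r))))
      - welfare n f (hybrid Opt (i - 1) S) \<le> opt_gain + non_owner_gain (js ! r)"
    if "r < length js" for r
    using hybrid_gain_Some_le assms nth_mem[OF that] by blast
  have "measure_pmf.expectation (choose_pmf js)
      (\<lambda>c. welfare n f (hybrid Opt i (step_outcome f i S c)) - welfare n f (hybrid Opt (i - 1) S))
    \<le> (\<Sum>r<length js. (1/2) ^ Suc r * (opt_gain + non_owner_gain (js ! r))) + (1/2) ^ length js * opt_gain"
    unfolding expectation_choose_pmf
    by (intro add_mono sum_mono mult_left_mono) (use Some_bound in \<open>auto simp: opt_gain_def\<close>)
  also have "\<dots> = C * opt_gain + (1/2) ^ length js * opt_gain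
      + (\<Sum>r<length js. (1/2) ^ Suc r * non_owner_gain (js ! r))"
    unfolding C_def by (simp add: distrib_left sum.distrib sum_distrib_right)
  also have "C * opt_gain + (1/2) ^ length js * opt_gain = opt_gain"
    using sum_half_powers[of "length js"] unfolding C_def by (simp flip: distrib_right)
  finally show ?thesis .
qed

lemma opt_gain_le_weighted_gain:
  assumes "valid_order n f i S js"
  shows "opt_gain + (\<Sum>r<length js. (1/2) ^ Suc r * non_owner_gain (js ! r))
    \<le> 2 * (\<Sum>r<length js. (1/2) ^ Suc r * gain (js ! r))"
proof (cases "\<exists>j\<in>{1..n}. i \<in> Opt j")
  case True
  define N where "N = length js"
  define x where "x r = gain (js ! r)" for r
  have js: "set js = {1..n}" "sorted_wrt (\<lambda>a b. marg (f a) i (S a) \<ge> marg (f b) i (S b)) js"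
    using assms unfolding valid_order_def by auto
  obtain p where p: "p < N" "i \<in> Opt (js ! p)"
    using True js(1) unfolding N_def by (metis in_set_conv_nth)
  have "opt_gain \<le> x p"
    unfolding x_def using opt_gain_le_gain_owner js(1) p N_def nth_mem by blast
  also have "\<dots> \<le> (\<Sum>r<N. (1/2) ^ Suc r * x r) + (1/2) ^ Suc p * x p"
  proof (rule le_halving_weighted_sum)
    show "x p \<le> x r" if "r < p" for r
      using sorted_wrt_nth_less[OF js(2) that] p(1) unfolding x_def gain_def N_def by simp
  qed (use p in \<open>auto simp: x_def gain_nonneg\<close>)
  finally have "opt_gain \<le> (\<Sum>r<N. (1/2) ^ Suc r * x r) + (1/2) ^ Suc p * x p" .
  moreover have "(\<Sum>r<N. (1/2) ^ Suc r * non_owner_gain (js ! r)) + (1/2) ^ Suc p * x p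
      \<le> (\<Sum>r<N. (1/2) ^ Suc r * x r)"
  proof -
    have "(\<Sum>r<N. (1/2) ^ Suc r * non_owner_gain (js ! r))
        = (\<Sum>r\<in>{..<N} - {p}. (1/2) ^ Suc r * non_owner_gain (js ! r))"
      using p by (intro sum.mono_neutral_right) (auto simp: non_owner_gain_def)
    also have "\<dots> \<le> (\<Sum>r\<in>{..<N} - {p}. (1/2) ^ Suc r * x r)"
      by (intro sum_mono) (auto simp: non_owner_gain_def x_def gain_nonneg)
    finally show ?thesis using p by (simp add: sum.remove[of "{..<N}" p])
  qed
  ultimately show ?thesis unfolding N_def x_def by linarith
next
  case False
  have "set js = {1..n}"
    using assms unfolding valid_order_def by blast
  then have "non_owner_gain (js ! r) = gain (js ! r)" if "r < length js" for r
    using False nth_mem[OF that] by (auto simp: non_owner_gain_def)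
  then have "(\<Sum>r<length js. (1/2) ^ Suc r * non_owner_gain (js ! r))
      = (\<Sum>r<length js. (1/2) ^ Suc r * gain (js ! r))"
    by (intro sum.cong) auto
  moreover have "opt_gain = 0"
    using False opt_gain_no_owner by blast
  moreover have "0 \<le> (\<Sum>r<length js. (1/2::real) ^ Suc r * gain (js ! r))"
    by (intro sum_nonneg) (simp add: gain_nonneg)
  ultimately show ?thesis by simp
qed

lemma expected_hybrid_gain_le_twice_expected_gain:
  assumes order: "valid_order n f i S (tb i S)"
  shows "measure_pmf.expectation (alg_step f tb i S)
      (\<lambda>S'. welfare n f (hybrid Opt i S') - welfare n f (hybrid Opt (i - 1) S))
    \<le> 2 * measure_pmf.expectation (alg_step f tb i S) (\<lambda>S'. welfare n f S' - welfare n f S)"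
proof -
  have js: "set (tb i S) \<subseteq> {1..n}"
    using order unfolding valid_order_def by blast
  have "measure_pmf.expectation (choose_pmf (tb i S))
      (\<lambda>c. welfare n f (hybrid Opt i (step_outcome f i S c)) - welfare n f (hybrid Opt (i - 1) S))
    \<le> opt_gain + (\<Sum>r<length (tb i S). (1/2) ^ Suc r * non_owner_gain (tb i S ! r))"
    by (rule expectation_choose_hybrid_gain_le[OF js])
  also have "\<dots> \<le> 2 * (\<Sum>r<length (tb i S). (1/2) ^ Suc r * gain (tb i S ! r))"
    by (rule opt_gain_le_weighted_gain[OF order])
  finally show ?thesis
    unfolding alg_step_eq_map_step_outcome integral_map_pmf expectation_choose_gain[OF js] .
qed

end

theorem lemma6:
  fixes n m :: nat
    and f :: "nat \<Rightarrow> nat set \<Rightarrow> real"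
    and tb :: "nat \<Rightarrow> alloc \<Rightarrow> nat list"
    and Opt :: alloc
  assumes sub: "\<forall>j\<in>{1..n}. submodular_on {1..m} (f j)"
    and nonneg: "\<forall>j\<in>{1..n}. nonneg_on {1..m} (f j)"
    and tb_valid: "\<forall>i S. valid_order n f i S (tb i S)"
    and opt: "optimal_alloc n m f Opt"
    and i: "i \<in> {1..m}"
  shows "measure_pmf.expectation (alg_traj f tb m)
           (\<lambda>T. welfare n f (hybrid Opt i (T i)) - welfare n f (hybrid Opt (i - 1) (T (i - 1))))
         \<le> 2 * measure_pmf.expectation (alg_traj f tb m)
           (\<lambda>T. welfare n f (T i) - welfare n f (T (i - 1)))"
proof -
  let ?prefix = "alg_traj f tb (i - 1)"
  let ?K = "\<lambda>X Y. welfare n f (hybrid Opt i Y) - welfare n f (hybrid Opt (i - 1) X)"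
  let ?P = "\<lambda>X Y. welfare n f Y - welfare n f X"
  have feasible: "feasible_alloc n m Opt" using opt unfolding optimal_alloc_def by simp
  have step_bound: "measure_pmf.expectation (alg_step f tb i (T (i - 1))) (?K (T (i - 1)))
      \<le> 2 * measure_pmf.expectation (alg_step f tb i (T (i - 1))) (?P (T (i - 1)))"
    if "T \<in> set_pmf ?prefix" for T
  proof -
    interpret item_step n m f Opt i "T (i - 1)"
      using sub feasible i alg_traj_items_subset[OF that] by unfold_locales simp_all
    show ?thesis
      by (rule expected_hybrid_gain_le_twice_expected_gain) (use tb_valid in blast)
  qed
  then have "(\<Sum>T\<in>set_pmf ?prefix. pmf ?prefix T *
        measure_pmf.expectation (alg_step f tb i (T (i - 1))) (?K (T (i - 1))))
      \<le> 2 * (\<Sum>T\<in>set_pmf ?prefix. pmf ?prefix T *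
        measure_pmf.expectation (alg_step f tb i (T (i - 1))) (?P (T (i - 1))))"
    unfolding sum_distrib_left
    by (intro sum_mono, subst mult.left_commute) (intro mult_left_mono step_bound pmf_nonneg)
  then show ?thesis
    unfolding expectation_alg_traj_item[OF i, of f tb ?K] expectation_alg_traj_item[OF i, of f tb ?P] .
qed

end
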